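(* Let $n\ge0$, $\alpha\ge1$ be integers, $N=2^{n+1}$, $c=2^\alpha+1$, and consider the $c$-DAG over the uniform dataset $\{0,\dots,N-1\}$ (described in the context). Let $s$ be a real number with $1<s\le N$ and $\kappa=\lfloor\log_2(N/s)\rfloor$. If $2^{n-\kappa}<s\le\frac{c-2}{c-1}2^{n-\kappa+1}$, then for every $x\in[0,N-s]$ the query $Q=[x,x+s)$ satisfies $\mathrm{level}_{c\text{-DAG}}(Q)=\kappa$.
   Context: The $c$-DAG over $\mathcal{D}=\{0,\dots,N-1\}\subset[0,N)$ has levels $\ell=0,\dots,n+1$; with $u_\ell=2^{n-\ell+1}/(c-1)$, its level-$\ell$ nodes are the intervals $[mu_\ell,\,mu_\ell+2^{n-\ell+1})$, $m=0,1,\dots,(c-1)2^\ell-(c-1)$ (a node $[a,a+L)$ has children $[a+jL/(2(c-1)),\,a+jL/(2(c-1))+L/2)$, $j=0,\dots,c-1$). SRC-search returns a node of the deepest level whose interval contains $Q$; $\mathrm{level}_{c\text{-DAG}}(Q)$ is the largest $\ell$ such that some level-$\ell$ node contains $Q$. *)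

theory Defs
  imports Complex_Main
begin

text \<open>The c-DAG over the dataset {0,...,N-1}, N = 2^(n+1).\<close>

definition cdag_unit :: "nat \<Rightarrow> nat \<Rightarrow> nat \<Rightarrow> real" where
  "cdag_unit n c l = 2 ^ (n + 1 - l) / (real c - 1)"

definition cdag_interval :: "nat \<Rightarrow> nat \<Rightarrow> nat \<Rightarrow> nat \<Rightarrow> real set" where
  "cdag_interval n c l m =
     {real m * cdag_unit n c l ..< real m * cdag_unit n c l + 2 ^ (n + 1 - l)}"

definition cdag_node :: "nat \<Rightarrow> nat \<Rightarrow> nat \<Rightarrow> real set \<Rightarrow> bool" where
  "cdag_node n c l I \<longleftrightarrow> l \<le> n + 1 \<and>
     (\<exists>m. m \<le> (c - 1) * 2 ^ l - (c - 1) \<and> I = cdag_interval n c l m)"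

definition cdag_level :: "nat \<Rightarrow> nat \<Rightarrow> real set \<Rightarrow> nat" where
  "cdag_level n c Q = (GREATEST l. \<exists>I. cdag_node n c l I \<and> Q \<subseteq> I)"

end

theory Submission
  imports Defs
begin

text \<open>A query of length \<open>s\<close> fits into some level-\<open>k\<close> node as soon as
  \<open>s \<le> (c - 2) u\<^sub>k\<close>: consecutive level-\<open>k\<close> nodes are shifted by \<open>u\<^sub>k\<close> and have
  length \<open>(c - 1) u\<^sub>k\<close>, so the node starting at the grid point \<open>\<lfloor>x / u\<^sub>k\<rfloor> u\<^sub>k\<close>
  works, and near the right end the last node, which ends at \<open>N\<close>, does.
  Conversely a level-\<open>l\<close> node has length \<open>2\<^bsup>n+1-l\<^esup>\<close>, which for \<open>l > k\<close> is at
  most \<open>2\<^bsup>n-k\<^esup> < s\<close>.\<close>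

lemma cdag_unit_pos: "2 \<le> c \<Longrightarrow> 0 < cdag_unit n c l"
  unfolding cdag_unit_def by simp

lemma cdag_node_length: "2 \<le> c \<Longrightarrow> (real c - 1) * cdag_unit n c l = 2 ^ (n + 1 - l)"
  unfolding cdag_unit_def by simp

lemma cdag_last_node_end:
  assumes "2 \<le> c" and "l \<le> n + 1"
  shows "real ((c - 1) * 2 ^ l - (c - 1)) * cdag_unit n c l + 2 ^ (n + 1 - l) = 2 ^ (n + 1)"
proof -
  have "c - 1 \<le> (c - 1) * 2 ^ l"
    by simp
  then have "real ((c - 1) * 2 ^ l - (c - 1)) = (real c - 1) * (2 ^ l - 1)"
    using assms(1) by (simp add: of_nat_diff algebra_simps)
  then have "real ((c - 1) * 2 ^ l - (c - 1)) * cdag_unit n c l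
      = (2 ^ l - 1) * ((real c - 1) * cdag_unit n c l)"
    by simp
  also have "\<dots> = (2 ^ l - 1) * 2 ^ (n + 1 - l)"
    using cdag_node_length[OF assms(1)] by simp
  also have "\<dots> = 2 ^ l * 2 ^ (n + 1 - l) - 2 ^ (n + 1 - l)"
    by (simp add: algebra_simps)
  also have "(2::real) ^ l * 2 ^ (n + 1 - l) = 2 ^ (n + 1)"
    using assms(2) by (simp flip: power_add)
  finally show ?thesis by simp
qed

lemma ex_cdag_node_superset:
  assumes "2 \<le> c" and "l \<le> n + 1"
    and "0 \<le> x" and "x + s \<le> 2 ^ (n + 1)" and "s \<le> (real c - 2) * cdag_unit n c l"
  shows "\<exists>I. cdag_node n c l I \<and> {x..<x + s} \<subseteq> I"
proof -
  define u where "u = cdag_unit n c l"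
  define M where "M = (c - 1) * 2 ^ l - (c - 1)"
  define m where "m = min (nat \<lfloor>x / u\<rfloor>) M"
  have u_pos: "0 < u"
    unfolding u_def using cdag_unit_pos[OF assms(1)] .
  have grid_le_x: "real (nat \<lfloor>x / u\<rfloor>) * u \<le> x"
    using mult_right_mono[OF of_int_floor_le[of "x / u"], of u] assms(3) u_pos by simp
  have "x / u < of_int \<lfloor>x / u\<rfloor> + 1"
    using floor_correct[of "x / u"] by linarith
  then have "x < (of_int \<lfloor>x / u\<rfloor> + 1) * u"
    using pos_divide_less_eq[OF u_pos] by blast
  then have x_lt_next_grid: "x < (real (nat \<lfloor>x / u\<rfloor>) + 1) * u"
    using assms(3) u_pos by simp
  have "real m * u \<le> real (nat \<lfloor>x / u\<rfloor>) * u"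
    unfolding m_def using u_pos by (intro mult_right_mono) simp_all
  with grid_le_x have start_le: "real m * u \<le> x"
    by linarith
  have "x + s \<le> real m * u + 2 ^ (n + 1 - l)"
  proof (cases "nat \<lfloor>x / u\<rfloor> \<le> M")
    case True
    then show ?thesis
      using x_lt_next_grid assms(5) cdag_node_length[OF assms(1), of n l]
      unfolding m_def u_def by (simp add: algebra_simps)
  next
    case False
    then show ?thesis
      using assms(4) cdag_last_node_end[OF assms(1,2)] unfolding m_def M_def u_def by simp
  qed
  then have "{x..<x + s} \<subseteq> cdag_interval n c l m"
    using start_le unfolding cdag_interval_def u_def by simp
  moreover have "cdag_node n c l (cdag_interval n c l m)"
    unfolding cdag_node_def using assms(2) m_def M_def by (metis min.cobounded2)
  ultimately show ?thesis by blast
qed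

lemma cdag_node_superset_length:
  assumes "cdag_node n c l I" and "{x..<x + s} \<subseteq> I" and "0 < s"
  shows "s \<le> 2 ^ (n + 1 - l)"
  using assms unfolding cdag_node_def cdag_interval_def by auto

lemma cdag_level_query:
  assumes "2 \<le> c" and "k \<le> n"
    and "2 ^ (n - k) < s" and "s \<le> (real c - 2) * cdag_unit n c k"
    and "0 \<le> x" and "x + s \<le> 2 ^ (n + 1)"
  shows "cdag_level n c {x..<x + s} = k"
  unfolding cdag_level_def
proof (rule Greatest_equality)
  show "\<exists>I. cdag_node n c k I \<and> {x..<x + s} \<subseteq> I"
    using ex_cdag_node_superset assms by simp
next
  fix l
  assume "\<exists>I. cdag_node n c l I \<and> {x..<x + s} \<subseteq> I"
  moreover have "0 < s"
    using assms(3) zero_less_power[of "2::real" "n - k"] by linarith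
  ultimately have "s \<le> 2 ^ (n + 1 - l)"
    using cdag_node_superset_length by blast
  then have "2 ^ (n - k) < (2::real) ^ (n + 1 - l)"
    using assms(3) by linarith
  then have "n - k < n + 1 - l"
    by simp
  then show "l \<le> k"
    using assms(2) by linarith
qed

theorem lemma2:
  fixes n \<alpha> :: nat and s x :: real and N :: real and c :: nat and \<kappa> :: int
  assumes "\<alpha> \<ge> 1"
    and "N = 2 ^ (n + 1)"
    and "c = 2 ^ \<alpha> + 1"
    and "1 < s" and "s \<le> N"
    and "\<kappa> = \<lfloor>log 2 (N / s)\<rfloor>"
    and "2 powr (real n - real_of_int \<kappa>) < s"
    and "s \<le> (real c - 2) / (real c - 1) * 2 powr (real n - real_of_int \<kappa> + 1)"
    and "0 \<le> x" and "x \<le> N - s"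
  shows "int (cdag_level n c {x..<x + s}) = \<kappa>"
proof -
  have c_ge_2: "2 \<le> c"
    using assms(3) by simp
  have "2 powr (real n - \<kappa>) < 2 powr real (n + 1)"
    using assms(2,5,7) powr_realpow[of 2 "n + 1"] by simp
  then have \<kappa>_nonneg: "0 \<le> \<kappa>"
    by simp
  have "(real c - 2) / (real c - 1) * 2 powr (real n - \<kappa> + 1) \<le> 2 powr (real n - \<kappa> + 1)"
    using c_ge_2 by (intro mult_left_le_one_le) simp_all
  with assms(8) have "s \<le> 2 powr (real n - \<kappa> + 1)"
    by linarith
  then have "1 < 2 powr (real n - \<kappa> + 1)"
    using assms(4) by simp
  then have \<kappa>_le_n: "\<kappa> \<le> n"
    using powr_less_cancel_iff[of 2 0 "real n - \<kappa> + 1"] by simp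
  define k where "k = nat \<kappa>"
  have \<kappa>_eq: "\<kappa> = int k" and "k \<le> n"
    using \<kappa>_nonneg \<kappa>_le_n unfolding k_def by auto
  then have "real n - \<kappa> = real (n - k)" and "real n - \<kappa> + 1 = real (n + 1 - k)"
    by simp_all
  then have "2 powr (real n - \<kappa>) = 2 ^ (n - k)" and "2 powr (real n - \<kappa> + 1) = 2 ^ (n + 1 - k)"
    by (metis powr_realpow zero_less_numeral)+
  with assms(7,8) have "2 ^ (n - k) < s" and "s \<le> (real c - 2) * cdag_unit n c k"
    unfolding cdag_unit_def by simp_all
  then have "cdag_level n c {x..<x + s} = k"
    using cdag_level_query c_ge_2 \<open>k \<le> n\<close> assms(2,9,10) by simp
  then show ?thesis
    using \<kappa>_eq by simp
qed

end
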